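(* Let $\{d_{k,j}:k,j\geq 0\}$ be nonnegative numbers such that $D_j(\delta):=\sum_{k\geq 0}d_{k,j}\delta^k\in(0,\infty)$ for all $\delta>0$ and all $j\geq 0$. Let $\{\delta_j(\cdot):j\geq 0\}$ be positive functions on $[0,\infty)$ with $\delta_j(t)\to\infty$ as $t\to\infty$ for every $j$, assume $\sum_{j\geq 0}\frac{d_{j,j}\delta^j}{D_j(\delta)}\in(0,\infty)$ for all $\delta>0$, and let $\{N(t):t\geq 0\}$ be nonnegative integer valued random variables with $$P(N(t)=k)=\frac{\frac{d_{k,k}(\delta_k(t))^k}{D_k(\delta_k(t))}}{\sum_{j\geq 0}\frac{d_{j,j}(\delta_j(t))^j}{D_j(\delta_j(t))}},\quad k\geq 0.$$ Assume the following: (B1) there exists an integer $n\geq 0$ such that for all $j\geq n$, $d_{k,j}=d_k$ for all $k\geq 0$ (so $D_j=D:=\sum_{k\ge0}d_k\delta^k$) and $\delta_j(\cdot)=\delta(\cdot)$ do not depend on $j$; moreover there exist functions $v:(0,\infty)\to(0,\infty)$ with $v(t)\to\infty$ as $t\to\infty$, and a differentiable function $\Delta:(0,\infty)\to\mathbb{R}$, such that $\lim_{t\to\infty}\frac{1}{v(t)}\log D(ut)=\Delta(u)$ for all $u>0$; (B2) the set $\{k\geq 0:d_{k,k}>0\}$ is unbounded; (B3) for all $k\in\{0,1,\ldots,n-1\}$: if $d_k>0$ then $\lim_{t\to\infty}\frac{d_{k,k}(\delta_k(t))^k/D_k(\delta_k(t))}{d_k(\delta(t))^k/D(\delta(t))}=0$,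 and if $d_k=0$ then $d_{k,k}=0$. Then $\left\{\frac{N(t)}{v(\delta(t))}:t>0\right\}$ satisfies the large deviation principle with speed $v(\delta(t))$ and good rate function $\Lambda^*(x):=\sup_{\theta\in\mathbb{R}}\{\theta x-\Lambda(\theta)\}$, where $\Lambda(\theta):=\Delta(e^\theta)-\Delta(1)$.
   Context: A family of real random variables $\{X_t:t>0\}$ satisfies the large deviation principle (LDP) with speed $v_t\to\infty$ and rate function $I$ (a lower semicontinuous map $\mathbb{R}\to[0,\infty]$; good if all level sets $\{I\le\eta\}$ are compact) if $\limsup_{t\to\infty}\frac{1}{v_t}\log P(X_t\in C)\leq-\inf_{x\in C}I(x)$ for all closed $C$ and $\liminf_{t\to\infty}\frac{1}{v_t}\log P(X_t\in O)\geq-\inf_{x\in O}I(x)$ for all open $O$. *)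

theory Defs
  imports "HOL-Probability.Probability"
begin

definition gen_series :: "(nat \<Rightarrow> real) \<Rightarrow> real \<Rightarrow> real" where
  "gen_series c x = (\<Sum>k. c k * x ^ k)"

definition elog :: "real \<Rightarrow> ereal" where
  "elog p = (if p \<le> 0 then -\<infinity> else ereal (ln p))"

definition rate_function :: "(real \<Rightarrow> ereal) \<Rightarrow> bool" where
  "rate_function I \<longleftrightarrow> (\<forall>x. I x \<ge> 0) \<and> (\<forall>\<eta>::real. closed {x. I x \<le> ereal \<eta>})"

definition good_rate_function :: "(real \<Rightarrow> ereal) \<Rightarrow> bool" where
  "good_rate_function I \<longleftrightarrow> rate_function I \<and> (\<forall>\<eta>::real. compact {x. I x \<le> ereal \<eta>})"

text \<open>LDP for a family of real random variables X_t, given through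
  P t A = P(X_t \<in> A), with speed s and rate function I, as t \<rightarrow> \<infinity>.\<close>
definition LDP :: "(real \<Rightarrow> real set \<Rightarrow> real) \<Rightarrow> (real \<Rightarrow> real) \<Rightarrow> (real \<Rightarrow> ereal) \<Rightarrow> bool" where
  "LDP P s I \<longleftrightarrow> rate_function I \<and>
     (\<forall>C. closed C \<longrightarrow>
        Limsup at_top (\<lambda>t. ereal (1 / s t) * elog (P t C)) \<le> - (INF x\<in>C. I x)) \<and>
     (\<forall>U. open U \<longrightarrow>
        Liminf at_top (\<lambda>t. ereal (1 / s t) * elog (P t U)) \<ge> - (INF x\<in>U. I x))"

definition legendre :: "(real \<Rightarrow> real) \<Rightarrow> real \<Rightarrow> ereal" where
  "legendre L x = (SUP \<theta>\<in>UNIV. ereal (\<theta> * x - L \<theta>))"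

end

theory Submission
  imports Defs
begin

(* By (B1) the law of N(t) is, up to the finitely many atoms k < n, the power series
  distribution with coefficients d_k and parameter delta(t); by (B2) the series D grows faster
  than any power, so by (B3) the remaining atoms are negligible.  Hence the moment generating
  function of N(t) at theta is D(e^theta delta(t)) / D(delta(t)) up to a factor tending to 1, and
  the scaled cumulant generating functions converge to Lambda(theta) = Delta(e^theta) - Delta(1),
  finite and differentiable for every real theta.  The Gaertner-Ellis theorem then applies: the
  upper bound comes from Chernoff bounds together with the convexity of Lambda, the lower bound
  from exponential tilting at the points Lambda'(eta), which by Darboux's theorem approximate
  every point where the Legendre transform of Lambda is finite. *)

section \<open>Exponential estimates on the logarithmic scale\<close>

lemma LDP_cong_eventually:
  assumes "\<forall>\<^sub>F t in at_top. P t = P' t" and "\<forall>\<^sub>F t in at_top. s t = s' t"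
  shows "LDP P s I \<longleftrightarrow> LDP P' s' I"
proof -
  have "\<forall>\<^sub>F t in at_top. ereal (1 / s t) * elog (P t A) = ereal (1 / s' t) * elog (P' t A)" for A
    using assms by eventually_elim simp
  from Limsup_eq[OF this] Liminf_eq[OF this] show ?thesis
    unfolding LDP_def by simp
qed

lemma le_uminus_if_reals_below:
  fixes L m :: ereal
  assumes "\<And>r. ereal r < m \<Longrightarrow> L \<le> ereal (- r)"
  shows "L \<le> - m"
proof -
  have "m \<le> - L"
  proof (rule dense_le)
    fix y
    assume "y < m"
    then show "y \<le> - L"
    proof (cases y)
      case (real r)
      then have "L \<le> - ereal r"
        using assms \<open>y < m\<close> by simp
      then show ?thesis
        using real by (metis ereal_minus_le_minus ereal_uminus_uminus)
    qed (use \<open>y < m\<close> in auto)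
  qed
  then show ?thesis
    by (metis ereal_minus_le_minus ereal_uminus_uminus)
qed

lemma Limsup_scaled_elog_le:
  fixes q s :: "real \<Rightarrow> real"
  assumes s: "filterlim s at_top at_top" and K: "K > 0"
    and q: "\<forall>\<^sub>F t in at_top. q t \<le> K * exp (- (s t * r))"
  shows "Limsup at_top (\<lambda>t. ereal (1 / s t) * elog (q t)) \<le> ereal (- r)"
proof -
  have "\<forall>\<^sub>F t in at_top. s t > 0"
    using s by (simp add: filterlim_at_top_dense)
  with q have "\<forall>\<^sub>F t in at_top. ereal (1 / s t) * elog (q t) \<le> ereal (ln K / s t - r)"
  proof eventually_elim
    case (elim t)
    show ?case
    proof (cases "q t > 0")
      case True
      have "ln (q t) \<le> ln K - s t * r"
      proof -
        have "ln (q t) \<le> ln (K * exp (- (s t * r)))"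
          using elim True by simp
        also have "\<dots> = ln K - s t * r"
          using K by (simp add: ln_mult)
        finally show ?thesis .
      qed
      then have "ln (q t) / s t \<le> ln K / s t - r"
        using elim by (simp add: field_simps)
      then show ?thesis using True by (simp add: elog_def)
    qed (use elim in \<open>simp add: elog_def\<close>)
  qed
  then have "Limsup at_top (\<lambda>t. ereal (1 / s t) * elog (q t)) \<le> Limsup at_top (\<lambda>t. ereal (ln K / s t - r))"
    by (rule Limsup_mono)
  also have "\<dots> = ereal (- r)"
  proof (rule lim_imp_Limsup[OF trivial_limit_at_top_linorder])
    have "((\<lambda>t. ln K / s t - r) \<longlongrightarrow> 0 - r) at_top"
      by (intro tendsto_intros tendsto_divide_0[OF tendsto_const]
          filterlim_at_top_imp_at_infinity[OF s])
    then show "((\<lambda>t. ereal (ln K / s t - r)) \<longlongrightarrow> ereal (- r)) at_top"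
      by (simp add: tendsto_ereal)
  qed
  finally show ?thesis .
qed

lemma Liminf_scaled_elog_ge:
  fixes q s g :: "real \<Rightarrow> real"
  assumes s: "filterlim s at_top at_top" and K: "K > 0" and g: "(g \<longlongrightarrow> c) at_top"
    and q: "\<forall>\<^sub>F t in at_top. K * exp (- (s t * g t)) \<le> q t"
  shows "ereal (- c) \<le> Liminf at_top (\<lambda>t. ereal (1 / s t) * elog (q t))"
proof -
  have "\<forall>\<^sub>F t in at_top. s t > 0"
    using s by (simp add: filterlim_at_top_dense)
  with q have "\<forall>\<^sub>F t in at_top. ereal (ln K / s t - g t) \<le> ereal (1 / s t) * elog (q t)"
  proof eventually_elim
    case (elim t)
    have pos: "q t > 0"
      using elim(1) K by (meson exp_gt_zero mult_pos_pos less_le_trans)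
    have "ln K - s t * g t = ln (K * exp (- (s t * g t)))"
      using K by (simp add: ln_mult)
    also have "\<dots> \<le> ln (q t)"
      using elim(1) K by (intro ln_mono) auto
    finally have "(ln K - s t * g t) / s t \<le> ln (q t) / s t"
      using elim(2) by (simp add: divide_right_mono)
    then have "ln K / s t - g t \<le> ln (q t) / s t"
      using elim(2) by (simp add: diff_divide_distrib)
    then show ?case using pos by (simp add: elog_def)
  qed
  then have "Liminf at_top (\<lambda>t. ereal (ln K / s t - g t)) \<le> Liminf at_top (\<lambda>t. ereal (1 / s t) * elog (q t))"
    by (rule Liminf_mono)
  moreover have "Liminf at_top (\<lambda>t. ereal (ln K / s t - g t)) = ereal (- c)"
  proof (rule lim_imp_Liminf[OF trivial_limit_at_top_linorder])
    have "((\<lambda>t. ln K / s t - g t) \<longlongrightarrow> 0 - c) at_top"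
      by (intro tendsto_intros g tendsto_divide_0[OF tendsto_const]
          filterlim_at_top_imp_at_infinity[OF s])
    then show "((\<lambda>t. ereal (ln K / s t - g t)) \<longlongrightarrow> ereal (- c)) at_top"
      by (simp add: tendsto_ereal)
  qed
  ultimately show ?thesis by simp
qed

lemma measure_nat_valued_eq_suminf:
  assumes M: "finite_measure M" and N: "N \<in> measurable M (count_space UNIV)"
  shows "measure M {\<omega> \<in> space M. Q (N \<omega>)}
    = (\<Sum>k. if Q k then measure M {\<omega> \<in> space M. N \<omega> = k} else 0)"
proof -
  have sets: "{\<omega> \<in> space M. N \<omega> = k \<and> Q k} \<in> sets M" for k
    using N by measurable
  have "(\<lambda>k. measure M {\<omega> \<in> space M. N \<omega> = k \<and> Q k}) sums measure M (\<Union>k. {\<omega> \<in> space M. N \<omega> = k \<and> Q k})"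
    by (rule finite_measure.finite_measure_UNION[OF M]) (use sets in \<open>auto simp: disjoint_family_on_def\<close>)
  moreover have "(\<Union>k. {\<omega> \<in> space M. N \<omega> = k \<and> Q k}) = {\<omega> \<in> space M. Q (N \<omega>)}"
    by auto
  moreover have "measure M {\<omega> \<in> space M. N \<omega> = k \<and> Q k}
      = (if Q k then measure M {\<omega> \<in> space M. N \<omega> = k} else 0)" for k
    by simp
  ultimately show ?thesis
    by (simp add: sums_iff)
qed

section \<open>Derivatives and conjugate bounds\<close>

lemma DERIV_Darboux:
  fixes f f' :: "real \<Rightarrow> real"
  assumes f': "\<And>\<theta>. a \<le> \<theta> \<Longrightarrow> \<theta> \<le> b \<Longrightarrow> (f has_real_derivative f' \<theta>) (at \<theta>)"
    and ab: "a < b" and x: "f' a < x" "x < f' b"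
  shows "\<exists>c\<in>{a<..<b}. f' c = x"
proof -
  define g where "g \<theta> = \<theta> * x - f \<theta>" for \<theta>
  have g': "(g has_real_derivative x - f' \<theta>) (at \<theta>)" if "a \<le> \<theta>" "\<theta> \<le> b" for \<theta>
    unfolding g_def using f'[OF that] by (auto intro!: derivative_eq_intros)
  have "continuous_on {a..b} g"
    using g' by (intro continuous_at_imp_continuous_on ballI DERIV_isCont) auto
  then obtain c where c: "c \<in> {a..b}" and max: "\<And>y. y \<in> {a..b} \<Longrightarrow> g y \<le> g c"
    using continuous_attains_sup[of "{a..b}" g] ab by auto
  have "c \<noteq> a"
  proof
    assume "c = a"
    obtain d where "d > 0" and inc: "\<And>h. 0 < h \<Longrightarrow> h < d \<Longrightarrow> g a < g (a + h)"
      using DERIV_pos_inc_right[OF g'[of a]] ab x by auto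
    define h where "h = min (d / 2) (b - a)"
    have "0 < h" "h < d" "a + h \<in> {a..b}"
      using \<open>d > 0\<close> ab by (auto simp: h_def)
    with inc max[of "a + h"] \<open>c = a\<close> show False by fastforce
  qed
  moreover have "c \<noteq> b"
  proof
    assume "c = b"
    obtain d where "d > 0" and inc: "\<And>h. 0 < h \<Longrightarrow> h < d \<Longrightarrow> g b < g (b - h)"
      using DERIV_neg_dec_left[OF g'[of b]] ab x by auto
    define h where "h = min (d / 2) (b - a)"
    have "0 < h" "h < d" "b - h \<in> {a..b}"
      using \<open>d > 0\<close> ab by (auto simp: h_def)
    with inc max[of "b - h"] \<open>c = b\<close> show False by fastforce
  qed
  ultimately have c': "c \<in> {a<..<b}"
    using c by auto
  have "x - f' c = 0"
  proof (rule DERIV_local_max[OF g'])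
    show "0 < min (c - a) (b - c)"
      using c' by simp
    show "\<forall>y. \<bar>c - y\<bar> < min (c - a) (b - c) \<longrightarrow> g y \<le> g c"
      by (auto intro!: max)
  qed (use c in auto)
  with c' show ?thesis by auto
qed

lemma DERIV_Darboux_one_side:
  fixes f f' :: "real \<Rightarrow> real"
  assumes f': "\<And>\<theta>. (f has_real_derivative f' \<theta>) (at \<theta>)" and avoid: "\<And>\<theta>. f' \<theta> \<noteq> x"
  shows "(\<forall>\<theta>. f' \<theta> < x) \<or> (\<forall>\<theta>. x < f' \<theta>)"
proof (rule ccontr)
  assume "\<not> ?thesis"
  then obtain a b where ab: "f' a < x" "x < f' b"
    using avoid by (meson linorder_not_le order.not_eq_order_implies_strict)
  consider "a < b" | "b < a"
    using ab by (cases a b rule: linorder_cases) auto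
  then show False
  proof cases
    case 1
    from DERIV_Darboux[OF f' 1 ab] avoid show False by blast
  next
    case 2
    have "((\<lambda>\<theta>. - f \<theta>) has_real_derivative - f' \<theta>) (at \<theta>)" for \<theta>
      using f' by (rule DERIV_minus)
    from DERIV_Darboux[OF this 2, of "- x"] ab avoid show False by force
  qed
qed

lemma DERIV_below_approaches:
  fixes f f' :: "real \<Rightarrow> real"
  assumes f': "\<And>\<theta>. (f has_real_derivative f' \<theta>) (at \<theta>)"
    and bound: "\<And>\<theta>. \<theta> * x - f \<theta> \<le> c" and below: "\<And>\<theta>. f' \<theta> < x" and \<epsilon>: "\<epsilon> > 0"
  shows "\<exists>\<eta>\<ge>0. x - \<epsilon> < f' \<eta>"
proof (rule ccontr)
  assume "\<not> ?thesis"
  then have far: "\<And>\<eta>. \<eta> \<ge> 0 \<Longrightarrow> f' \<eta> \<le> x - \<epsilon>"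
    by force
  define T where "T = (c + f 0 + 1) / \<epsilon>"
  have T: "T > 0" "T * \<epsilon> = c + f 0 + 1"
    using bound[of 0] \<epsilon> by (auto simp: T_def)
  have g': "((\<lambda>\<theta>. \<theta> * x - f \<theta>) has_real_derivative x - f' \<theta>) (at \<theta>)" for \<theta>
    by (auto intro!: derivative_eq_intros f')
  obtain z where z: "0 < z" "z < T" and mvt: "(T * x - f T) - (0 * x - f 0) = (T - 0) * (x - f' z)"
    using MVT2[OF T(1) g'] by blast
  have "T * \<epsilon> \<le> T * (x - f' z)"
    using far[of z] z T by (intro mult_left_mono) auto
  then have "c + 1 \<le> T * x - f T"
    using T(2) mvt by simp
  with bound[of T] show False
    by simp
qed

lemma DERIV_above_approaches:
  fixes f f' :: "real \<Rightarrow> real"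
  assumes f': "\<And>\<theta>. (f has_real_derivative f' \<theta>) (at \<theta>)"
    and bound: "\<And>\<theta>. \<theta> * x - f \<theta> \<le> c" and above: "\<And>\<theta>. x < f' \<theta>" and \<epsilon>: "\<epsilon> > 0"
  shows "\<exists>\<eta>\<le>0. f' \<eta> < x + \<epsilon>"
proof -
  have mirror: "((\<lambda>\<theta>. f (- \<theta>)) has_real_derivative - f' (- \<theta>)) (at \<theta>)" for \<theta>
    using f' DERIV_mirror by blast
  have mirror_bound: "\<theta> * - x - f (- \<theta>) \<le> c" for \<theta>
    using bound[of "- \<theta>"] by simp
  have mirror_below: "- f' (- \<theta>) < - x" for \<theta>
    using above by simp
  obtain \<eta> where "\<eta> \<ge> 0" "- x - \<epsilon> < - f' (- \<eta>)"
    using DERIV_below_approaches[OF mirror mirror_bound mirror_below \<epsilon>] by blast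
  then show ?thesis
    by (intro exI[of _ "- \<eta>"]) simp
qed

lemma exists_DERIV_in_open_conjugate_le:
  fixes f f' :: "real \<Rightarrow> real"
  assumes f': "\<And>\<theta>. (f has_real_derivative f' \<theta>) (at \<theta>)"
    and bound: "\<And>\<theta>. \<theta> * x - f \<theta> \<le> c" and U: "open U" "x \<in> U"
  shows "\<exists>\<eta>. f' \<eta> \<in> U \<and> \<eta> * f' \<eta> - f \<eta> \<le> c"
proof (cases "\<exists>\<eta>. f' \<eta> = x")
  case True
  with bound U show ?thesis by metis
next
  case False
  obtain \<epsilon> where \<epsilon>: "\<epsilon> > 0" "ball x \<epsilon> \<subseteq> U"
    using U openE by blast
  \<comment> \<open>\<open>\<eta>\<close> is taken on the same side of 0 as \<open>f'\<close> is of \<open>x\<close>, so that \<open>\<eta> * f' \<eta> \<le> \<eta> * x\<close>.\<close>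
  have "(\<forall>\<theta>. f' \<theta> < x) \<or> (\<forall>\<theta>. x < f' \<theta>)"
    using DERIV_Darboux_one_side[OF f'] False by blast
  then have "\<exists>\<eta>. dist x (f' \<eta>) < \<epsilon> \<and> \<eta> * f' \<eta> \<le> \<eta> * x"
  proof
    assume below: "\<forall>\<theta>. f' \<theta> < x"
    then obtain \<eta> where "\<eta> \<ge> 0" "x - \<epsilon> < f' \<eta>"
      using DERIV_below_approaches[OF f' bound _ \<epsilon>(1)] by blast
    with below[rule_format, of \<eta>] show ?thesis
      by (intro exI[of _ \<eta>]) (simp add: dist_real_def mult_left_mono)
  next
    assume above: "\<forall>\<theta>. x < f' \<theta>"
    then obtain \<eta> where "\<eta> \<le> 0" "f' \<eta> < x + \<epsilon>"
      using DERIV_above_approaches[OF f' bound _ \<epsilon>(1)] by blast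
    with above[rule_format, of \<eta>] show ?thesis
      by (intro exI[of _ \<eta>]) (simp add: dist_real_def mult_left_mono_neg)
  qed
  then obtain \<eta> where "dist x (f' \<eta>) < \<epsilon>" "\<eta> * f' \<eta> \<le> \<eta> * x"
    by blast
  moreover from this(2) have "\<eta> * f' \<eta> - f \<eta> \<le> c"
    using bound[of \<eta>] by linarith
  ultimately show ?thesis
    using \<epsilon>(2) by auto
qed

section \<open>The Gaertner-Ellis theorem for integer-valued variables\<close>

locale gaertner_ellis_nat =
  fixes p :: "real \<Rightarrow> nat \<Rightarrow> real" and s :: "real \<Rightarrow> real" and \<Lambda> :: "real \<Rightarrow> real"
  assumes p_nonneg: "\<And>t k. p t k \<ge> 0"
    and p_sums: "\<And>t. p t sums 1"
    and s_pos: "\<And>t. s t > 0"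
    and s_lim: "filterlim s at_top at_top"
    and mgf_summable: "\<And>t \<theta>. summable (\<lambda>k. exp (\<theta> * real k) * p t k)"
    and cgf_lim: "\<And>\<theta>. ((\<lambda>t. ln (\<Sum>k. exp (\<theta> * real k) * p t k) / s t) \<longlongrightarrow> \<Lambda> \<theta>) at_top"
    and \<Lambda>_differentiable: "\<And>\<theta>. \<Lambda> differentiable (at \<theta>)"
begin

definition mgf :: "real \<Rightarrow> real \<Rightarrow> real"
  where "mgf t \<theta> = (\<Sum>k. exp (\<theta> * real k) * p t k)"

definition tilted_mass :: "real \<Rightarrow> real \<Rightarrow> real set \<Rightarrow> real"
  where "tilted_mass t \<eta> A = (\<Sum>k. if real k / s t \<in> A then exp (\<eta> * real k) * p t k else 0)"

definition mass :: "real \<Rightarrow> real set \<Rightarrow> real"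
  where "mass t A = (\<Sum>k. if real k / s t \<in> A then p t k else 0)"

definition scaled_cgf :: "real \<Rightarrow> real \<Rightarrow> real"
  where "scaled_cgf t \<theta> = ln (mgf t \<theta>) / s t"

abbreviation I :: "real \<Rightarrow> ereal"
  where "I \<equiv> legendre \<Lambda>"

lemma mass_eq_tilted_mass: "mass t A = tilted_mass t 0 A"
  unfolding mass_def tilted_mass_def by (intro suminf_cong) simp

lemma tilted_summable:
  "summable (\<lambda>k. if real k / s t \<in> A then exp (\<eta> * real k) * p t k else 0)"
  by (rule summable_comparison_test'[OF mgf_summable[of \<eta> t]]) (auto simp: p_nonneg)

lemma tilted_mass_mono: "A \<subseteq> B \<Longrightarrow> tilted_mass t \<eta> A \<le> tilted_mass t \<eta> B"
  unfolding tilted_mass_def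
  by (rule suminf_le[OF _ tilted_summable tilted_summable]) (auto simp: p_nonneg)

lemma tilted_mass_union: "tilted_mass t \<eta> (A \<union> B) \<le> tilted_mass t \<eta> A + tilted_mass t \<eta> B"
proof -
  have "tilted_mass t \<eta> (A \<union> B) \<le> (\<Sum>k. (if real k / s t \<in> A then exp (\<eta> * real k) * p t k else 0)
     + (if real k / s t \<in> B then exp (\<eta> * real k) * p t k else 0))"
    unfolding tilted_mass_def
    by (rule suminf_le[OF _ tilted_summable summable_add[OF tilted_summable tilted_summable]])
      (auto simp: p_nonneg)
  also have "\<dots> = tilted_mass t \<eta> A + tilted_mass t \<eta> B"
    unfolding tilted_mass_def by (rule suminf_add[OF tilted_summable tilted_summable, symmetric])
  finally show ?thesis .
qed

lemma tilted_mass_add_compl: "tilted_mass t \<eta> A + tilted_mass t \<eta> (- A) = mgf t \<eta>"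
proof -
  have "tilted_mass t \<eta> A + tilted_mass t \<eta> (- A) = (\<Sum>k. (if real k / s t \<in> A then exp (\<eta> * real k) * p t k else 0)
     + (if real k / s t \<in> - A then exp (\<eta> * real k) * p t k else 0))"
    unfolding tilted_mass_def by (rule suminf_add[OF tilted_summable tilted_summable])
  also have "\<dots> = mgf t \<eta>"
    unfolding mgf_def by (intro suminf_cong) auto
  finally show ?thesis .
qed

lemma mass_le_1: "mass t A \<le> 1"
proof -
  have "mass t A + mass t (- A) = 1"
    using tilted_mass_add_compl[of t 0 A] p_sums[of t]
    by (simp add: mass_eq_tilted_mass mgf_def sums_iff)
  moreover have "mass t (- A) \<ge> 0"
    unfolding mass_eq_tilted_mass tilted_mass_def
    by (intro suminf_nonneg tilted_summable) (simp add: p_nonneg)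
  ultimately show ?thesis by simp
qed

lemma mgf_pos: "mgf t \<theta> > 0"
proof -
  obtain i where "p t i \<noteq> 0"
    using p_sums[of t] by (metis sums_0 sums_unique2 zero_neq_one)
  then have "p t i > 0"
    using p_nonneg[of t i] by simp
  then show ?thesis
    unfolding mgf_def by (intro suminf_pos2[OF mgf_summable, of _ _ i]) (auto simp: p_nonneg)
qed

lemma mgf_eq_exp: "mgf t \<theta> = exp (s t * scaled_cgf t \<theta>)"
  using mgf_pos[of t \<theta>] s_pos[of t] by (simp add: scaled_cgf_def)

lemma scaled_cgf_tendsto: "((\<lambda>t. scaled_cgf t \<theta>) \<longlongrightarrow> \<Lambda> \<theta>) at_top"
  using cgf_lim[of \<theta>] by (simp add: scaled_cgf_def mgf_def)

lemma tilted_mass_le_chernoff: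
  assumes "\<And>x. x \<in> C \<Longrightarrow> \<theta> * a \<le> \<theta> * x"
  shows "tilted_mass t \<eta> C \<le> exp (- (s t * \<theta> * a)) * mgf t (\<eta> + \<theta>)"
proof -
  have "tilted_mass t \<eta> C \<le> (\<Sum>k. exp (- (s t * \<theta> * a)) * (exp ((\<eta> + \<theta>) * real k) * p t k))"
    unfolding tilted_mass_def
  proof (rule suminf_le[OF _ tilted_summable summable_mult[OF mgf_summable]])
    fix k
    have "exp (\<eta> * real k) \<le> exp (- (s t * \<theta> * a)) * exp ((\<eta> + \<theta>) * real k)"
      if "real k / s t \<in> C"
    proof -
      have "\<theta> * a \<le> \<theta> * (real k / s t)"
        using assms that by blast
      then have "s t * \<theta> * a \<le> \<theta> * real k"
        using s_pos[of t] by (simp add: field_simps)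
      then show ?thesis
        by (simp add: exp_add[symmetric] algebra_simps)
    qed
    then show "(if real k / s t \<in> C then exp (\<eta> * real k) * p t k else 0)
        \<le> exp (- (s t * \<theta> * a)) * (exp ((\<eta> + \<theta>) * real k) * p t k)"
      using p_nonneg[of t k] by (auto simp: mult_right_mono mult.assoc[symmetric])
  qed
  also have "\<dots> = exp (- (s t * \<theta> * a)) * mgf t (\<eta> + \<theta>)"
    unfolding mgf_def by (rule suminf_mult[OF mgf_summable])
  finally show ?thesis .
qed

lemma ln_mgf_convex:
  assumes u: "0 \<le> u" "u \<le> 1"
  shows "ln (mgf t ((1 - u) * a + u * b)) \<le> (1 - u) * ln (mgf t a) + u * ln (mgf t b)"
proof -
  define A B where "A = mgf t a" and "B = mgf t b"
  define G where "G = exp ((1 - u) * ln A + u * ln B)"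
  have A: "A > 0" and B: "B > 0"
    using mgf_pos by (auto simp: A_def B_def)
  \<comment> \<open>Hoelder's inequality, via weighted AM-GM applied termwise to the normalised series.\<close>
  have term_le: "exp (((1 - u) * a + u * b) * real k) * p t k
     \<le> G * ((1 - u) * (exp (a * real k) * p t k / A) + u * (exp (b * real k) * p t k / B))" for k
  proof (cases "p t k = 0")
    case False
    then have pk: "p t k > 0"
      using p_nonneg[of t k] by simp
    define X Y where "X = a * real k + ln (p t k) - ln A" and "Y = b * real k + ln (p t k) - ln B"
    have "(1 - u) * X + u * Y
        = ((1 - u) * a + u * b) * real k + ln (p t k) - ((1 - u) * ln A + u * ln B)"
      by (simp add: X_def Y_def algebra_simps)
    then have "exp (((1 - u) * a + u * b) * real k) * p t k = G * exp ((1 - u) * X + u * Y)"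
      using pk by (simp add: G_def exp_diff exp_add)
    also have "\<dots> \<le> G * ((1 - u) * exp X + u * exp Y)"
      using convex_onD[OF exp_convex, of u X Y] u by (simp add: G_def)
    also have "\<dots> = G * ((1 - u) * (exp (a * real k) * p t k / A) + u * (exp (b * real k) * p t k / B))"
      using pk A B by (simp add: X_def Y_def exp_diff exp_add)
    finally show ?thesis .
  qed (simp add: p_nonneg)
  have normalised: "(\<lambda>k. exp (\<theta> * real k) * p t k / mgf t \<theta>) sums 1" for \<theta>
    using sums_divide[OF summable_sums[OF mgf_summable], of \<theta> t "mgf t \<theta>"] mgf_pos[of t \<theta>]
    by (simp add: mgf_def)
  have "mgf t ((1 - u) * a + u * b) \<le> G * ((1 - u) * 1 + u * 1)"
    unfolding mgf_def by (rule sums_le[OF term_le summable_sums[OF mgf_summable]])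
      (intro sums_mult sums_add normalised[of a, folded A_def] normalised[of b, folded B_def])
  then have "ln (mgf t ((1 - u) * a + u * b)) \<le> ln G"
    by (intro ln_mono mgf_pos) simp
  then show ?thesis
    by (simp add: G_def A_def B_def)
qed

lemma convex_\<Lambda>: "convex_on UNIV \<Lambda>"
proof (rule convex_onI)
  fix u x y :: real
  assume u: "0 < u" "u < 1"
  have lim: "((\<lambda>t. (1 - u) * scaled_cgf t x + u * scaled_cgf t y) \<longlongrightarrow> (1 - u) * \<Lambda> x + u * \<Lambda> y) at_top"
    by (intro tendsto_intros scaled_cgf_tendsto)
  have "\<forall>\<^sub>F t in at_top. scaled_cgf t ((1 - u) * x + u * y) \<le> (1 - u) * scaled_cgf t x + u * scaled_cgf t y"
  proof (intro always_eventually allI)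
    fix t
    have "ln (mgf t ((1 - u) * x + u * y)) / s t \<le> ((1 - u) * ln (mgf t x) + u * ln (mgf t y)) / s t"
      using ln_mgf_convex[of u t x y] u s_pos[of t] by (simp add: divide_right_mono)
    then show "scaled_cgf t ((1 - u) * x + u * y) \<le> (1 - u) * scaled_cgf t x + u * scaled_cgf t y"
      by (simp add: scaled_cgf_def add_divide_distrib)
  qed
  then have "\<Lambda> ((1 - u) * x + u * y) \<le> (1 - u) * \<Lambda> x + u * \<Lambda> y"
    by (rule tendsto_le[OF trivial_limit_at_top_linorder lim scaled_cgf_tendsto])
  then show "\<Lambda> ((1 - u) *\<^sub>R x + u *\<^sub>R y) \<le> (1 - u) * \<Lambda> x + u * \<Lambda> y"
    by simp
qed simp

lemma \<Lambda>_0: "\<Lambda> 0 = 0"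
proof -
  have "scaled_cgf t 0 = 0" for t
    using p_sums[of t] by (simp add: scaled_cgf_def mgf_def sums_iff)
  then show ?thesis
    using scaled_cgf_tendsto[of 0] by (simp add: tendsto_const_iff)
qed

lemma DERIV_\<Lambda>: "(\<Lambda> has_real_derivative deriv \<Lambda> \<theta>) (at \<theta>)"
  using \<Lambda>_differentiable DERIV_deriv_iff_real_differentiable by blast

lemma \<Lambda>_above_tangent: "deriv \<Lambda> c * (x - c) \<le> \<Lambda> x - \<Lambda> c"
  by (rule convex_on_imp_above_tangent[OF convex_\<Lambda>]) (auto simp: DERIV_\<Lambda>)

lemma I_le_iff: "I x \<le> ereal c \<longleftrightarrow> (\<forall>\<theta>. \<theta> * x - \<Lambda> \<theta> \<le> c)"
  unfolding legendre_def by (simp add: SUP_le_iff)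

lemma less_I_iff: "ereal c < I x \<longleftrightarrow> (\<exists>\<theta>. c < \<theta> * x - \<Lambda> \<theta>)"
  unfolding legendre_def by (simp add: less_SUP_iff)

lemma I_nonneg: "I x \<ge> 0"
  unfolding legendre_def by (rule SUP_upper2[of 0]) (simp_all add: \<Lambda>_0 zero_ereal_def)

lemma closed_sublevel_I: "closed {x. I x \<le> ereal c}"
proof -
  have "{x. I x \<le> ereal c} = (\<Inter>\<theta>. {x. \<theta> * x - \<Lambda> \<theta> \<le> c})"
    by (auto simp: I_le_iff)
  then show ?thesis
    by (simp add: closed_INT closed_Collect_le continuous_intros)
qed

lemma compact_sublevel_I: "compact {x. I x \<le> ereal c}"
proof -
  have "{x. I x \<le> ereal c} \<subseteq> cball 0 (c + \<bar>\<Lambda> 1\<bar> + \<bar>\<Lambda> (-1)\<bar>)"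
  proof
    fix x
    assume "x \<in> {x. I x \<le> ereal c}"
    then have "x - \<Lambda> 1 \<le> c" "- x - \<Lambda> (-1) \<le> c"
      using I_le_iff[of x c] by (auto dest: spec[of _ 1] spec[of _ "-1"])
    then show "x \<in> cball 0 (c + \<bar>\<Lambda> 1\<bar> + \<bar>\<Lambda> (-1)\<bar>)"
      by (auto simp: dist_real_def)
  qed
  then show ?thesis
    using closed_sublevel_I bounded_cball bounded_subset compact_eq_bounded_closed by blast
qed

lemma good_rate_function_I: "good_rate_function I"
  unfolding good_rate_function_def rate_function_def
  using I_nonneg closed_sublevel_I compact_sublevel_I by blast

lemma mass_le_exp_if_exceeds:
  assumes r: "r < \<theta> * a - \<Lambda> \<theta>" and C: "\<And>x. x \<in> C \<Longrightarrow> \<theta> * a \<le> \<theta> * x"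
  shows "\<forall>\<^sub>F t in at_top. mass t C \<le> exp (- (s t * r))"
proof -
  have "\<forall>\<^sub>F t in at_top. scaled_cgf t \<theta> < \<theta> * a - r"
    using r by (intro order_tendstoD(2)[OF scaled_cgf_tendsto]) simp
  then show ?thesis
  proof eventually_elim
    case (elim t)
    have "mass t C \<le> exp (- (s t * \<theta> * a)) * mgf t (0 + \<theta>)"
      unfolding mass_eq_tilted_mass by (rule tilted_mass_le_chernoff[OF C])
    also have "\<dots> = exp (- (s t * (\<theta> * a - scaled_cgf t \<theta>)))"
      by (simp add: mgf_eq_exp exp_add[symmetric] algebra_simps)
    also have "\<dots> \<le> exp (- (s t * r))"
      using elim s_pos[of t] by (simp add: mult_left_mono)
    finally show ?case .
  qed
qed

lemma mass_le_exp_at_extreme_point: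
  assumes a: "a \<in> C" and extreme: "\<And>x. x \<in> C \<Longrightarrow> 0 \<le> (a - deriv \<Lambda> 0) * (x - a)"
    and above: "\<And>x. x \<in> C \<Longrightarrow> ereal r < I x" and "0 \<le> r"
  shows "\<forall>\<^sub>F t in at_top. mass t C \<le> exp (- (s t * r))"
proof -
  obtain \<theta> where \<theta>: "r < \<theta> * a - \<Lambda> \<theta>"
    using above[OF a] less_I_iff by blast
  \<comment> \<open>The tangent of \<open>\<Lambda>\<close> at 0 forces \<open>\<theta>\<close> to have the sign of \<open>a - deriv \<Lambda> 0\<close>.\<close>
  have "\<theta> * a - \<Lambda> \<theta> \<le> \<theta> * (a - deriv \<Lambda> 0)"
    using \<Lambda>_above_tangent[of 0 \<theta>] by (simp add: \<Lambda>_0 algebra_simps)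
  then have sign: "0 < \<theta> * (a - deriv \<Lambda> 0)"
    using \<theta> \<open>0 \<le> r\<close> by linarith
  have "\<theta> * a \<le> \<theta> * x" if "x \<in> C" for x
    using sign extreme[OF that]
    by (auto simp: zero_less_mult_iff zero_le_mult_iff intro: mult_left_mono mult_left_mono_neg)
  then show ?thesis
    by (rule mass_le_exp_if_exceeds[OF \<theta>])
qed

lemma mass_empty: "mass t {} = 0"
  by (simp add: mass_def)

lemma mass_le_exp_one_side:
  assumes C: "closed C" "C \<subseteq> {deriv \<Lambda> 0..} \<or> C \<subseteq> {..deriv \<Lambda> 0}"
    and above: "\<And>x. x \<in> C \<Longrightarrow> ereal r < I x" and "0 \<le> r"
  shows "\<forall>\<^sub>F t in at_top. mass t C \<le> exp (- (s t * r))"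
proof (cases "C = {}")
  case False
  from C(2) show ?thesis
  proof
    assume right: "C \<subseteq> {deriv \<Lambda> 0..}"
    then have bdd: "bdd_below C"
      by (auto intro: bdd_belowI)
    show ?thesis
      using closed_contains_Inf[OF False bdd C(1)] right bdd \<open>0 \<le> r\<close>
      by (intro mass_le_exp_at_extreme_point[where a = "Inf C"] above)
        (auto intro!: mult_nonneg_nonneg cInf_lower)
  next
    assume left: "C \<subseteq> {..deriv \<Lambda> 0}"
    then have bdd: "bdd_above C"
      by (auto intro: bdd_aboveI)
    show ?thesis
      using closed_contains_Sup[OF False bdd C(1)] left bdd \<open>0 \<le> r\<close>
      by (intro mass_le_exp_at_extreme_point[where a = "Sup C"] above)
        (auto intro!: mult_nonpos_nonpos cSup_upper)
  qed
qed (simp add: mass_empty)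

lemma upper_bound:
  assumes "closed C"
  shows "Limsup at_top (\<lambda>t. ereal (1 / s t) * elog (mass t C)) \<le> - (INF x\<in>C. I x)"
proof (rule le_uminus_if_reals_below)
  fix r
  assume r: "ereal r < (INF x\<in>C. I x)"
  show "Limsup at_top (\<lambda>t. ereal (1 / s t) * elog (mass t C)) \<le> ereal (- r)"
  proof (cases "r \<le> 0")
    case True
    have "Limsup at_top (\<lambda>t. ereal (1 / s t) * elog (mass t C)) \<le> ereal (- 0)"
      by (rule Limsup_scaled_elog_le[OF s_lim, of 1]) (simp_all add: mass_le_1)
    with True show ?thesis
      by (simp add: order_trans)
  next
    case False
    define D where "D = deriv \<Lambda> 0"
    have above: "\<And>x. x \<in> C \<Longrightarrow> ereal r < I x"
      using r by (simp add: less_INF_D)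
    have "\<forall>\<^sub>F t in at_top. mass t (C \<inter> {D..}) \<le> exp (- (s t * r))"
      "\<forall>\<^sub>F t in at_top. mass t (C \<inter> {..D}) \<le> exp (- (s t * r))"
      using \<open>closed C\<close> False above by (auto intro!: mass_le_exp_one_side simp: D_def)
    then have "\<forall>\<^sub>F t in at_top. mass t C \<le> 2 * exp (- (s t * r))"
    proof eventually_elim
      case (elim t)
      have "mass t C \<le> mass t (C \<inter> {D..}) + mass t (C \<inter> {..D})"
        unfolding mass_eq_tilted_mass
        by (rule order_trans[OF tilted_mass_mono tilted_mass_union]) auto
      with elim show ?case
        by simp
    qed
    then show ?thesis
      by (rule Limsup_scaled_elog_le[OF s_lim, rotated]) simp
  qed
qed

lemma tilted_mass_tail_small:
  assumes q: "0 < \<theta> * a - \<Lambda> (\<eta> + \<theta>) + \<Lambda> \<eta>" and C: "\<And>x. x \<in> C \<Longrightarrow> \<theta> * a \<le> \<theta> * x"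
    and \<epsilon>: "\<epsilon> > 0"
  shows "\<forall>\<^sub>F t in at_top. tilted_mass t \<eta> C \<le> \<epsilon> * mgf t \<eta>"
proof -
  define q where "q = \<theta> * a - \<Lambda> (\<eta> + \<theta>) + \<Lambda> \<eta>"
  have "((\<lambda>t. \<theta> * a - scaled_cgf t (\<eta> + \<theta>) + scaled_cgf t \<eta>) \<longlongrightarrow> q) at_top"
    unfolding q_def by (intro tendsto_intros scaled_cgf_tendsto)
  then have "\<forall>\<^sub>F t in at_top. q / 2 < \<theta> * a - scaled_cgf t (\<eta> + \<theta>) + scaled_cgf t \<eta>"
    using q by (intro order_tendstoD(1)) (auto simp: q_def)
  moreover have "\<forall>\<^sub>F t in at_top. - 2 * ln \<epsilon> / q \<le> s t"
    using s_lim by (simp add: filterlim_at_top)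
  ultimately show ?thesis
  proof eventually_elim
    case (elim t)
    have "tilted_mass t \<eta> C \<le> exp (- (s t * \<theta> * a)) * mgf t (\<eta> + \<theta>)"
      by (rule tilted_mass_le_chernoff[OF C])
    also have "\<dots> = exp (- (s t * (\<theta> * a - scaled_cgf t (\<eta> + \<theta>) + scaled_cgf t \<eta>))) * mgf t \<eta>"
      by (simp add: mgf_eq_exp exp_add[symmetric] algebra_simps)
    also have "\<dots> \<le> exp (- (s t * (q / 2))) * mgf t \<eta>"
      using elim s_pos[of t] mgf_pos[of t \<eta>] by (simp add: mult_left_mono)
    also have "exp (- (s t * (q / 2))) \<le> \<epsilon>"
    proof -
      have "- 2 * ln \<epsilon> / q * (q / 2) \<le> s t * (q / 2)"
        using elim q by (intro mult_right_mono) (auto simp: q_def)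
      then have "- (s t * (q / 2)) \<le> ln \<epsilon>"
        using q by (simp add: q_def)
      then show ?thesis
        using \<epsilon> by (simp add: ln_ge_iff)
    qed
    finally show ?case
      using mgf_pos[of t \<eta>] by (simp add: mult_right_mono)
  qed
qed

lemma tilted_exponent_pos:
  assumes "\<epsilon> > 0"
  shows "\<exists>\<theta>>0. 0 < \<theta> * (deriv \<Lambda> \<eta> + \<epsilon>) - \<Lambda> (\<eta> + \<theta>) + \<Lambda> \<eta>"
    and "\<exists>\<theta><0. 0 < \<theta> * (deriv \<Lambda> \<eta> - \<epsilon>) - \<Lambda> (\<eta> + \<theta>) + \<Lambda> \<eta>"
proof -
  have g': "((\<lambda>\<theta>. \<theta> * x - \<Lambda> \<theta>) has_real_derivative x - deriv \<Lambda> \<eta>) (at \<eta>)" for x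
    by (auto intro!: derivative_eq_intros DERIV_\<Lambda>)
  obtain d where d: "d > 0" and inc: "\<And>h. 0 < h \<Longrightarrow> h < d \<Longrightarrow>
      \<eta> * (deriv \<Lambda> \<eta> + \<epsilon>) - \<Lambda> \<eta> < (\<eta> + h) * (deriv \<Lambda> \<eta> + \<epsilon>) - \<Lambda> (\<eta> + h)"
    using DERIV_pos_inc_right[OF g'] assms by force
  have "0 < d / 2 * (deriv \<Lambda> \<eta> + \<epsilon>) - \<Lambda> (\<eta> + d / 2) + \<Lambda> \<eta>"
    using inc[of "d / 2"] d by (simp add: algebra_simps)
  with d show "\<exists>\<theta>>0. 0 < \<theta> * (deriv \<Lambda> \<eta> + \<epsilon>) - \<Lambda> (\<eta> + \<theta>) + \<Lambda> \<eta>"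
    by (intro exI[of _ "d / 2"]) simp
  obtain d where d: "d > 0" and dec: "\<And>h. 0 < h \<Longrightarrow> h < d \<Longrightarrow>
      \<eta> * (deriv \<Lambda> \<eta> - \<epsilon>) - \<Lambda> \<eta> < (\<eta> - h) * (deriv \<Lambda> \<eta> - \<epsilon>) - \<Lambda> (\<eta> - h)"
    using DERIV_neg_dec_left[OF g'] assms by force
  have "0 < - (d / 2) * (deriv \<Lambda> \<eta> - \<epsilon>) - \<Lambda> (\<eta> + - (d / 2)) + \<Lambda> \<eta>"
    using dec[of "d / 2"] d by (simp add: algebra_simps)
  with d show "\<exists>\<theta><0. 0 < \<theta> * (deriv \<Lambda> \<eta> - \<epsilon>) - \<Lambda> (\<eta> + \<theta>) + \<Lambda> \<eta>"
    by (intro exI[of _ "- (d / 2)"]) simp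
qed

lemma mass_ge_tilted_mass:
  assumes "\<epsilon> > 0"
  shows "exp (- (s t * (\<eta> * y + \<bar>\<eta>\<bar> * \<epsilon>))) * tilted_mass t \<eta> {y - \<epsilon><..<y + \<epsilon>}
    \<le> mass t {y - \<epsilon><..<y + \<epsilon>}"
proof -
  define B where "B = {y - \<epsilon><..<y + \<epsilon>}"
  define K where "K = s t * (\<eta> * y + \<bar>\<eta>\<bar> * \<epsilon>)"
  have "tilted_mass t \<eta> B \<le> (\<Sum>k. exp K * (if real k / s t \<in> B then exp (0 * real k) * p t k else 0))"
    unfolding tilted_mass_def
  proof (rule suminf_le[OF _ tilted_summable summable_mult[OF tilted_summable]])
    fix k
    have "\<eta> * real k \<le> K" if "real k / s t \<in> B"
    proof -
      have "\<bar>real k / s t - y\<bar> \<le> \<epsilon>"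
        using that by (simp add: B_def abs_le_iff)
      then have "\<eta> * (real k / s t - y) \<le> \<bar>\<eta>\<bar> * \<epsilon>"
        by (metis abs_ge_self abs_mult abs_ge_zero mult_left_mono order_trans)
      then show ?thesis
        using s_pos[of t] by (simp add: K_def field_simps)
    qed
    then show "(if real k / s t \<in> B then exp (\<eta> * real k) * p t k else 0)
        \<le> exp K * (if real k / s t \<in> B then exp (0 * real k) * p t k else 0)"
      using p_nonneg[of t k] by (simp add: mult_right_mono)
  qed
  also have "\<dots> = exp K * mass t B"
    unfolding mass_eq_tilted_mass tilted_mass_def by (rule suminf_mult[OF tilted_summable])
  finally have "exp (- K) * tilted_mass t \<eta> B \<le> exp (- K) * (exp K * mass t B)"
    by (rule mult_left_mono) simp
  also have "\<dots> = mass t B"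
    by (simp add: mult.assoc[symmetric] exp_add[symmetric])
  finally show ?thesis
    unfolding B_def K_def .
qed

lemma Liminf_mass_ge_near_deriv:
  assumes \<epsilon>: "\<epsilon> > 0" and U: "{deriv \<Lambda> \<eta> - \<epsilon><..<deriv \<Lambda> \<eta> + \<epsilon>} \<subseteq> U"
  shows "ereal (- (\<eta> * deriv \<Lambda> \<eta> + \<bar>\<eta>\<bar> * \<epsilon> - \<Lambda> \<eta>))
    \<le> Liminf at_top (\<lambda>t. ereal (1 / s t) * elog (mass t U))"
proof -
  define y where "y = deriv \<Lambda> \<eta>"
  define B where "B = {y - \<epsilon><..<y + \<epsilon>}"
  \<comment> \<open>Under the measure tilted by \<open>\<eta>\<close>, the mass concentrates near \<open>y\<close>: both tails are small.\<close>
  obtain \<theta>\<^sub>1 where \<theta>\<^sub>1: "\<theta>\<^sub>1 > 0" "0 < \<theta>\<^sub>1 * (y + \<epsilon>) - \<Lambda> (\<eta> + \<theta>\<^sub>1) + \<Lambda> \<eta>"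
    using tilted_exponent_pos(1)[OF \<epsilon>] by (auto simp: y_def)
  obtain \<theta>\<^sub>2 where \<theta>\<^sub>2: "\<theta>\<^sub>2 < 0" "0 < \<theta>\<^sub>2 * (y - \<epsilon>) - \<Lambda> (\<eta> + \<theta>\<^sub>2) + \<Lambda> \<eta>"
    using tilted_exponent_pos(2)[OF \<epsilon>] by (auto simp: y_def)
  have right: "\<forall>\<^sub>F t in at_top. tilted_mass t \<eta> {y + \<epsilon>..} \<le> 1 / 4 * mgf t \<eta>"
    using \<theta>\<^sub>1 by (intro tilted_mass_tail_small[OF \<theta>\<^sub>1(2)]) (auto intro: mult_left_mono)
  have left: "\<forall>\<^sub>F t in at_top. tilted_mass t \<eta> {..y - \<epsilon>} \<le> 1 / 4 * mgf t \<eta>"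
    using \<theta>\<^sub>2 by (intro tilted_mass_tail_small[OF \<theta>\<^sub>2(2)]) (auto intro: mult_left_mono_neg)
  have bound: "\<forall>\<^sub>F t in at_top.
      1 / 2 * exp (- (s t * (\<eta> * y + \<bar>\<eta>\<bar> * \<epsilon> - scaled_cgf t \<eta>))) \<le> mass t U"
    using right left
  proof eventually_elim
    case (elim t)
    have "tilted_mass t \<eta> (- B) \<le> tilted_mass t \<eta> {y + \<epsilon>..} + tilted_mass t \<eta> {..y - \<epsilon>}"
      by (rule order_trans[OF tilted_mass_mono tilted_mass_union]) (auto simp: B_def)
    then have center: "mgf t \<eta> / 2 \<le> tilted_mass t \<eta> B"
      using tilted_mass_add_compl[of t \<eta> B] elim by simp
    have "1 / 2 * exp (- (s t * (\<eta> * y + \<bar>\<eta>\<bar> * \<epsilon> - scaled_cgf t \<eta>)))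
        = exp (- (s t * (\<eta> * y + \<bar>\<eta>\<bar> * \<epsilon>))) * (mgf t \<eta> / 2)"
      by (simp add: mgf_eq_exp exp_add[symmetric] algebra_simps)
    also have "\<dots> \<le> exp (- (s t * (\<eta> * y + \<bar>\<eta>\<bar> * \<epsilon>))) * tilted_mass t \<eta> B"
      using center by (rule mult_left_mono) simp
    also have "\<dots> \<le> mass t B"
      unfolding B_def by (rule mass_ge_tilted_mass[OF \<epsilon>])
    also have "\<dots> \<le> mass t U"
      unfolding mass_eq_tilted_mass using U by (intro tilted_mass_mono) (simp add: B_def y_def)
    finally show ?case .
  qed
  have lim: "((\<lambda>t. \<eta> * y + \<bar>\<eta>\<bar> * \<epsilon> - scaled_cgf t \<eta>) \<longlongrightarrow> \<eta> * y + \<bar>\<eta>\<bar> * \<epsilon> - \<Lambda> \<eta>) at_top"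
    by (intro tendsto_intros scaled_cgf_tendsto)
  show ?thesis
    using Liminf_scaled_elog_ge[OF s_lim _ lim bound] unfolding y_def by simp
qed

lemma Liminf_mass_ge_at_deriv:
  assumes U: "open U" "deriv \<Lambda> \<eta> \<in> U"
  shows "ereal (- (\<eta> * deriv \<Lambda> \<eta> - \<Lambda> \<eta>)) \<le> Liminf at_top (\<lambda>t. ereal (1 / s t) * elog (mass t U))"
proof (rule ereal_le_epsilon2)
  fix e :: real
  assume e: "e > 0"
  obtain \<epsilon>\<^sub>0 where \<epsilon>\<^sub>0: "\<epsilon>\<^sub>0 > 0" "ball (deriv \<Lambda> \<eta>) \<epsilon>\<^sub>0 \<subseteq> U"
    using U openE by blast
  define \<epsilon> where "\<epsilon> = min \<epsilon>\<^sub>0 (e / (\<bar>\<eta>\<bar> + 1))"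
  have \<epsilon>: "\<epsilon> > 0"
    using \<epsilon>\<^sub>0 e by (simp add: \<epsilon>_def)
  have "{deriv \<Lambda> \<eta> - \<epsilon><..<deriv \<Lambda> \<eta> + \<epsilon>} \<subseteq> U"
    using \<epsilon>\<^sub>0 by (force simp: \<epsilon>_def dist_real_def abs_if)
  note lower = Liminf_mass_ge_near_deriv[OF \<epsilon> this]
  have "\<bar>\<eta>\<bar> * \<epsilon> \<le> \<bar>\<eta>\<bar> * (e / (\<bar>\<eta>\<bar> + 1))"
    by (rule mult_left_mono) (simp_all add: \<epsilon>_def)
  also have "\<dots> < e"
    using e by (simp add: field_simps)
  finally have "ereal (- (\<eta> * deriv \<Lambda> \<eta> - \<Lambda> \<eta>))
      \<le> ereal (- (\<eta> * deriv \<Lambda> \<eta> + \<bar>\<eta>\<bar> * \<epsilon> - \<Lambda> \<eta>)) + ereal e"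
    by simp
  also have "\<dots> \<le> Liminf at_top (\<lambda>t. ereal (1 / s t) * elog (mass t U)) + ereal e"
    using lower by (rule add_right_mono)
  finally show "ereal (- (\<eta> * deriv \<Lambda> \<eta> - \<Lambda> \<eta>))
      \<le> Liminf at_top (\<lambda>t. ereal (1 / s t) * elog (mass t U)) + ereal e" .
qed

lemma lower_bound:
  assumes U: "open U"
  shows "- (INF x\<in>U. I x) \<le> Liminf at_top (\<lambda>t. ereal (1 / s t) * elog (mass t U))"
proof -
  define L where "L = Liminf at_top (\<lambda>t. ereal (1 / s t) * elog (mass t U))"
  have "- L \<le> I x" if x: "x \<in> U" for x
  proof (cases "I x")
    case (real c)
    then have "\<theta> * x - \<Lambda> \<theta> \<le> c" for \<theta>
      using I_le_iff[of x c] by simp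
    then obtain \<eta> where \<eta>: "deriv \<Lambda> \<eta> \<in> U" "\<eta> * deriv \<Lambda> \<eta> - \<Lambda> \<eta> \<le> c"
      using exists_DERIV_in_open_conjugate_le[OF DERIV_\<Lambda> _ U x] by blast
    have "ereal (- (\<eta> * deriv \<Lambda> \<eta> - \<Lambda> \<eta>)) \<le> L"
      unfolding L_def by (rule Liminf_mass_ge_at_deriv[OF U \<eta>(1)])
    then have "- L \<le> ereal (\<eta> * deriv \<Lambda> \<eta> - \<Lambda> \<eta>)"
      by (metis ereal_minus_le_minus ereal_uminus_uminus uminus_ereal.simps(1))
    with \<eta>(2) real show ?thesis
      by (simp add: order_trans)
  qed (use I_nonneg[of x] in auto)
  then have "- L \<le> (INF x\<in>U. I x)"
    by (rule INF_greatest)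
  then show ?thesis
    unfolding L_def by (metis ereal_minus_le_minus ereal_uminus_uminus)
qed

theorem LDP_mass: "LDP mass s I"
  unfolding LDP_def using good_rate_function_I upper_bound lower_bound
  by (simp add: good_rate_function_def)

lemma LDP_of_law:
  fixes M :: "real \<Rightarrow> 'a measure" and N :: "real \<Rightarrow> 'a \<Rightarrow> nat"
  assumes law: "\<forall>\<^sub>F t in at_top. finite_measure (M t) \<and> N t \<in> measurable (M t) (count_space UNIV)
      \<and> (\<forall>k. measure (M t) {\<omega> \<in> space (M t). N t \<omega> = k} = p t k)"
    and speed: "\<forall>\<^sub>F t in at_top. s' t = s t"
  shows "LDP (\<lambda>t A. measure (M t) {\<omega> \<in> space (M t). real (N t \<omega>) / s' t \<in> A}) s' I"
proof -
  have "\<forall>\<^sub>F t in at_top. (\<lambda>A. measure (M t) {\<omega> \<in> space (M t). real (N t \<omega>) / s' t \<in> A}) = mass t"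
    using law speed
  proof eventually_elim
    case (elim t)
    then have fin: "finite_measure (M t)" and meas: "N t \<in> measurable (M t) (count_space UNIV)"
      and p: "\<And>k. measure (M t) {\<omega> \<in> space (M t). N t \<omega> = k} = p t k"
      by auto
    show ?case
    proof
      fix A
      show "measure (M t) {\<omega> \<in> space (M t). real (N t \<omega>) / s' t \<in> A} = mass t A"
        using measure_nat_valued_eq_suminf[OF fin meas, of "\<lambda>k. real k / s t \<in> A"]
        unfolding p by (simp add: mass_def \<open>s' t = s t\<close>)
    qed
  qed
  with speed show ?thesis
    using LDP_mass by (subst LDP_cong_eventually) auto
qed

end

section \<open>Perturbed power series distributions\<close>

lemma gen_series_ge_term:
  assumes "\<And>k. 0 \<le> c k" and "summable (\<lambda>k. c k * y ^ k)" and "0 \<le> y"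
  shows "c K * y ^ K \<le> gen_series c y"
  unfolding gen_series_def using sum_le_suminf[OF assms(2), of "{K}"] assms(1,3) by simp

lemma gen_series_pos:
  assumes "\<And>k. 0 \<le> c k" and "summable (\<lambda>k. c k * y ^ k)" and "0 < y" and "0 < c K"
  shows "0 < gen_series c y"
proof -
  have "0 < c K * y ^ K"
    using assms(3,4) by simp
  also have "\<dots> \<le> gen_series c y"
    using gen_series_ge_term[OF assms(1,2)] assms(3) by simp
  finally show ?thesis .
qed

lemma power_over_gen_series_tendsto_0:
  assumes c_nonneg: "\<And>k. 0 \<le> c k" and c_summable: "\<And>y. y > 0 \<Longrightarrow> summable (\<lambda>k. c k * y ^ k)"
    and unbounded: "\<not> bdd_above {k. c k > 0}"
  shows "((\<lambda>y. y ^ k / gen_series c y) \<longlongrightarrow> 0) at_top"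
proof -
  obtain K where K: "k < K" "c K > 0"
    using unbounded by (auto simp: bdd_above_def not_le)
  have bound: "\<forall>\<^sub>F y in at_top. y ^ k / gen_series c y \<le> (1 / c K) / y ^ (K - k)"
    using eventually_gt_at_top[of 0]
  proof eventually_elim
    case (elim y)
    have "0 < c K * y ^ K"
      using K elim by simp
    moreover have "c K * y ^ K \<le> gen_series c y"
      using gen_series_ge_term[OF c_nonneg c_summable] elim by simp
    ultimately have "y ^ k / gen_series c y \<le> y ^ k / (c K * y ^ K)"
      using elim by (intro divide_left_mono) auto
    also have "\<dots> = (1 / c K) / y ^ (K - k)"
      using K elim by (simp add: power_diff field_simps)
    finally show ?case .
  qed
  have nonneg: "\<forall>\<^sub>F y in at_top. 0 \<le> y ^ k / gen_series c y"
    using eventually_gt_at_top[of 0]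
    by eventually_elim (use gen_series_pos[OF c_nonneg c_summable _ K(2)] in \<open>simp add: less_imp_le\<close>)
  have "((\<lambda>y::real. (1 / c K) / y ^ (K - k)) \<longlongrightarrow> 0) at_top"
    using K by (intro tendsto_divide_0[OF tendsto_const] filterlim_at_top_imp_at_infinity
        filterlim_pow_at_top filterlim_ident) simp
  with nonneg bound show ?thesis
    by (rule tendsto_sandwich[OF _ _ tendsto_const])
qed

(* w k t stands for d_{k,k} delta_k(t)^k / D_k(delta_k(t)) and the assumptions are (B1)-(B3) for
  these weights.  W u t is their generating function, so W (exp theta) t / W 1 t is the moment
  generating function of N(t). *)
locale perturbed_power_series =
  fixes c :: "nat \<Rightarrow> real" and w :: "nat \<Rightarrow> real \<Rightarrow> real"
    and \<delta> v \<Delta> :: "real \<Rightarrow> real" and n :: nat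
  assumes c_nonneg: "\<And>k. 0 \<le> c k"
    and c_summable: "\<And>y. y > 0 \<Longrightarrow> summable (\<lambda>k. c k * y ^ k)"
    and c_unbounded: "\<not> bdd_above {k. c k > 0}"
    and \<delta>_pos: "\<And>t. t \<ge> 0 \<Longrightarrow> \<delta> t > 0"
    and \<delta>_lim: "filterlim \<delta> at_top at_top"
    and v_lim: "filterlim v at_top at_top"
    and \<Delta>_lim: "\<And>u. u > 0 \<Longrightarrow> ((\<lambda>t. ln (gen_series c (u * t)) / v t) \<longlongrightarrow> \<Delta> u) at_top"
    and w_nonneg: "\<And>k t. t \<ge> 0 \<Longrightarrow> 0 \<le> w k t"
    and w_tail: "\<And>k t. t \<ge> 0 \<Longrightarrow> n \<le> k \<Longrightarrow> w k t = c k * \<delta> t ^ k / gen_series c (\<delta> t)"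
    and w_head_pos: "\<And>k. k < n \<Longrightarrow> c k > 0 \<Longrightarrow>
      ((\<lambda>t. w k t / (c k * \<delta> t ^ k / gen_series c (\<delta> t))) \<longlongrightarrow> 0) at_top"
    and w_head_zero: "\<And>k t. k < n \<Longrightarrow> c k = 0 \<Longrightarrow> w k t = 0"
begin

abbreviation D :: "real \<Rightarrow> real"
  where "D \<equiv> gen_series c"

definition W :: "real \<Rightarrow> real \<Rightarrow> real"
  where "W u t = (\<Sum>k. u ^ k * w k t)"

lemma D_pos:
  assumes "y > 0"
  shows "D y > 0"
proof -
  obtain K where "c K > 0"
    using c_unbounded by (auto simp: bdd_above_def)
  then show ?thesis
    by (rule gen_series_pos[OF c_nonneg c_summable[OF assms] assms])
qed

lemma D_eq_suminf: "D y = (\<Sum>k. c k * y ^ k)"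
  by (simp add: gen_series_def)

lemma scaled_\<delta>_lim: "u > 0 \<Longrightarrow> filterlim (\<lambda>t. u * \<delta> t) at_top at_top"
  by (rule filterlim_tendsto_pos_mult_at_top[OF tendsto_const _ \<delta>_lim])

lemma power_over_D_tendsto_0:
  assumes "u > 0"
  shows "((\<lambda>t. (u * \<delta> t) ^ k / D (u * \<delta> t)) \<longlongrightarrow> 0) at_top"
  by (rule filterlim_compose[OF power_over_gen_series_tendsto_0[OF c_nonneg c_summable c_unbounded]
        scaled_\<delta>_lim[OF assms]])

lemma W_summable:
  assumes t: "t \<ge> 0" and u: "u > 0"
  shows "summable (\<lambda>k. u ^ k * w k t)"
proof -
  have "\<forall>\<^sub>F k in sequentially. c k * (u * \<delta> t) ^ k / D (\<delta> t) = u ^ k * w k t"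
    using eventually_ge_at_top[of n] by eventually_elim (simp add: w_tail[OF t] power_mult_distrib)
  moreover have "summable (\<lambda>k. c k * (u * \<delta> t) ^ k / D (\<delta> t))"
    using c_summable[of "u * \<delta> t"] u \<delta>_pos[OF t] by (intro summable_divide) simp
  ultimately show ?thesis
    using summable_cong by fastforce
qed

lemma W_pos:
  assumes t: "t \<ge> 0" and u: "u > 0"
  shows "W u t > 0"
proof -
  obtain K where K: "n < K" "c K > 0"
    using c_unbounded by (auto simp: bdd_above_def not_le)
  have "0 < u ^ K * w K t"
    using K u \<delta>_pos[OF t] D_pos[OF \<delta>_pos[OF t]] by (simp add: w_tail[OF t])
  then show ?thesis
    unfolding W_def using w_nonneg[OF t] u
    by (intro suminf_pos2[OF W_summable[OF t u]]) auto
qed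

lemma W_split:
  assumes t: "t \<ge> 0" and u: "u > 0"
  shows "W u t * D (\<delta> t)
    = (\<Sum>k<n. u ^ k * w k t) * D (\<delta> t) + D (u * \<delta> t) - (\<Sum>k<n. c k * (u * \<delta> t) ^ k)"
proof -
  define y where "y = u * \<delta> t"
  have sy: "summable (\<lambda>k. c k * y ^ k)"
    using c_summable u \<delta>_pos[OF t] by (simp add: y_def)
  have tail: "u ^ (m + n) * w (m + n) t = c (m + n) * y ^ (m + n) / D (\<delta> t)" for m
    by (simp add: w_tail[OF t] y_def power_mult_distrib)
  have "W u t = (\<Sum>m. u ^ (m + n) * w (m + n) t) + (\<Sum>k<n. u ^ k * w k t)"
    unfolding W_def by (rule suminf_split_initial_segment[OF W_summable[OF t u]])
  also have "(\<Sum>m. u ^ (m + n) * w (m + n) t) = (\<Sum>m. c (m + n) * y ^ (m + n)) / D (\<delta> t)"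
    unfolding tail by (rule suminf_divide) (use sy summable_iff_shift[of "\<lambda>k. c k * y ^ k" n] in simp)
  also have "(\<Sum>m. c (m + n) * y ^ (m + n)) = D y - (\<Sum>k<n. c k * y ^ k)"
    using suminf_split_initial_segment[OF sy, of n] by (simp add: D_eq_suminf)
  finally show ?thesis
    using D_pos[OF \<delta>_pos[OF t]] by (simp add: y_def field_simps)
qed

lemma head_term_tendsto_0:
  assumes k: "k < n" and u: "u > 0"
  shows "((\<lambda>t. u ^ k * w k t * D (\<delta> t) / D (u * \<delta> t)) \<longlongrightarrow> 0) at_top"
proof (cases "c k = 0")
  case True
  then show ?thesis
    by (simp add: w_head_zero[OF k])
next
  case False
  then have ck: "c k > 0"
    using c_nonneg[of k] by simp
  define R where "R t = w k t / (c k * \<delta> t ^ k / D (\<delta> t))" for t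
  have ev: "\<forall>\<^sub>F t in at_top. R t * c k * ((u * \<delta> t) ^ k / D (u * \<delta> t)) = u ^ k * w k t * D (\<delta> t) / D (u * \<delta> t)"
    using eventually_ge_at_top[of 0]
  proof eventually_elim
    case (elim t)
    then show ?case
      using \<delta>_pos[OF elim] D_pos[OF \<delta>_pos[OF elim]] ck by (simp add: R_def power_mult_distrib field_simps)
  qed
  have "((\<lambda>t. R t * c k * ((u * \<delta> t) ^ k / D (u * \<delta> t))) \<longlongrightarrow> 0 * c k * 0) at_top"
    unfolding R_def
    by (intro tendsto_mult tendsto_const w_head_pos[OF k ck] power_over_D_tendsto_0[OF u])
  then show ?thesis
    using tendsto_cong[OF ev] by simp
qed

lemma W_ratio_tendsto_1:
  assumes u: "u > 0"
  shows "((\<lambda>t. W u t * D (\<delta> t) / D (u * \<delta> t)) \<longlongrightarrow> 1) at_top"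
proof -
  have ev: "\<forall>\<^sub>F t in at_top. 1 + (\<Sum>k<n. u ^ k * w k t * D (\<delta> t) / D (u * \<delta> t))
      - (\<Sum>k<n. c k * ((u * \<delta> t) ^ k / D (u * \<delta> t))) = W u t * D (\<delta> t) / D (u * \<delta> t)"
    using eventually_ge_at_top[of 0]
  proof eventually_elim
    case (elim t)
    have "D (u * \<delta> t) > 0"
      using D_pos u \<delta>_pos[OF elim] by simp
    moreover have "(\<Sum>k<n. u ^ k * w k t * D (\<delta> t) / D (u * \<delta> t))
        = (\<Sum>k<n. u ^ k * w k t) * D (\<delta> t) / D (u * \<delta> t)"
      by (simp add: sum_divide_distrib sum_distrib_right)
    moreover have "(\<Sum>k<n. c k * ((u * \<delta> t) ^ k / D (u * \<delta> t)))
        = (\<Sum>k<n. c k * (u * \<delta> t) ^ k) / D (u * \<delta> t)"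
      by (simp add: sum_divide_distrib)
    ultimately show ?case
      unfolding W_split[OF elim u] by (simp add: field_simps)
  qed
  have "((\<lambda>t. 1 + (\<Sum>k<n. u ^ k * w k t * D (\<delta> t) / D (u * \<delta> t))
      - (\<Sum>k<n. c k * ((u * \<delta> t) ^ k / D (u * \<delta> t)))) \<longlongrightarrow> 1 + (\<Sum>k<n. 0) - (\<Sum>k<n. c k * 0)) at_top"
    by (intro tendsto_add tendsto_diff tendsto_const tendsto_sum tendsto_mult
        power_over_D_tendsto_0[OF u] head_term_tendsto_0[OF _ u]) simp
  then show ?thesis
    using tendsto_cong[OF ev] by simp
qed

lemma ln_W_tendsto:
  assumes u: "u > 0"
  shows "((\<lambda>t. ln (W u t) / v (\<delta> t)) \<longlongrightarrow> \<Delta> u - \<Delta> 1) at_top"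
proof -
  define B where "B t = W u t * D (\<delta> t) / D (u * \<delta> t)" for t
  have B: "(B \<longlongrightarrow> 1) at_top"
    unfolding B_def by (rule W_ratio_tendsto_1[OF u])
  have ev: "\<forall>\<^sub>F t in at_top. ln (D (u * \<delta> t)) / v (\<delta> t) + ln (B t) / v (\<delta> t)
      - ln (D (1 * \<delta> t)) / v (\<delta> t) = ln (W u t) / v (\<delta> t)"
    using eventually_ge_at_top[of 0]
  proof eventually_elim
    case (elim t)
    have "D (u * \<delta> t) > 0" "D (\<delta> t) > 0" "W u t > 0"
      using D_pos u \<delta>_pos[OF elim] W_pos[OF elim u] by auto
    then have "ln (W u t) = ln (B t) + ln (D (u * \<delta> t)) - ln (D (\<delta> t))"
      by (simp add: B_def ln_mult ln_div)
    then show ?case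
      by (simp add: diff_divide_distrib add_divide_distrib)
  qed
  have v\<delta>: "filterlim (\<lambda>t. v (\<delta> t)) at_top at_top"
    by (rule filterlim_compose[OF v_lim \<delta>_lim])
  have "((\<lambda>t. ln (D (u * \<delta> t)) / v (\<delta> t) + ln (B t) / v (\<delta> t) - ln (D (1 * \<delta> t)) / v (\<delta> t))
      \<longlongrightarrow> \<Delta> u + 0 - \<Delta> 1) at_top"
    using tendsto_ln[OF B]
    by (intro tendsto_intros filterlim_compose[OF \<Delta>_lim \<delta>_lim] u
        tendsto_divide_0[OF _ filterlim_at_top_imp_at_infinity[OF v\<delta>]]) auto
  then show ?thesis
    using tendsto_cong[OF ev] by simp
qed

lemma normalised_weights_mgf_sums:
  assumes "t \<ge> 0"
  shows "(\<lambda>k. exp (\<theta> * real k) * (w k t / W 1 t)) sums (W (exp \<theta>) t / W 1 t)"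
proof -
  have "(\<lambda>k. exp \<theta> ^ k * w k t / W 1 t) sums (W (exp \<theta>) t / W 1 t)"
    unfolding W_def[of "exp \<theta>"] by (intro sums_divide summable_sums W_summable assms exp_gt_zero)
  then show ?thesis
    by (simp add: exp_of_nat_mult[symmetric] mult.commute)
qed

lemma ln_normalised_mgf_tendsto:
  "((\<lambda>t. ln (W (exp \<theta>) t / W 1 t) / v (\<delta> t)) \<longlongrightarrow> \<Delta> (exp \<theta>) - \<Delta> 1) at_top"
proof -
  have "\<forall>\<^sub>F t in at_top. ln (W (exp \<theta>) t) / v (\<delta> t) - ln (W 1 t) / v (\<delta> t)
      = ln (W (exp \<theta>) t / W 1 t) / v (\<delta> t)"
    using eventually_ge_at_top[of 0]
  proof eventually_elim
    case (elim t)
    then show ?case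
      using W_pos[OF elim, of "exp \<theta>"] W_pos[OF elim, of 1] by (simp add: ln_div diff_divide_distrib)
  qed
  moreover have "((\<lambda>t. ln (W (exp \<theta>) t) / v (\<delta> t) - ln (W 1 t) / v (\<delta> t))
      \<longlongrightarrow> (\<Delta> (exp \<theta>) - \<Delta> 1) - (\<Delta> 1 - \<Delta> 1)) at_top"
    by (intro tendsto_intros ln_W_tendsto) auto
  ultimately show ?thesis
    using tendsto_cong by fastforce
qed

(* Time is clamped at 0 because the hypotheses only concern t >= 0; limits at infinity do not see
  the difference. *)
lemma gaertner_ellis_nat_normalised:
  assumes v_pos: "\<And>t. t > 0 \<Longrightarrow> v t > 0" and \<Delta>_diff: "\<And>u. u > 0 \<Longrightarrow> \<Delta> differentiable (at u)"
  shows "gaertner_ellis_nat (\<lambda>t k. w k (max t 0) / W 1 (max t 0)) (\<lambda>t. v (\<delta> (max t 0)))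
    (\<lambda>\<theta>. \<Delta> (exp \<theta>) - \<Delta> 1)"
proof
  fix t \<theta> :: real and k :: nat
  have t: "max t 0 \<ge> 0"
    by simp
  show "0 \<le> w k (max t 0) / W 1 (max t 0)"
    using w_nonneg[OF t] W_pos[OF t] by (simp add: less_imp_le)
  show "(\<lambda>k. w k (max t 0) / W 1 (max t 0)) sums 1"
    using normalised_weights_mgf_sums[OF t, of 0] W_pos[OF t, of 1] by simp
  show "summable (\<lambda>k. exp (\<theta> * real k) * (w k (max t 0) / W 1 (max t 0)))"
    using normalised_weights_mgf_sums[OF t] by (rule sums_summable)
  show "v (\<delta> (max t 0)) > 0"
    using v_pos \<delta>_pos[OF t] by simp
  have "\<forall>\<^sub>F t in at_top. ln (W (exp \<theta>) t / W 1 t) / v (\<delta> t)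
      = ln (\<Sum>k. exp (\<theta> * real k) * (w k (max t 0) / W 1 (max t 0))) / v (\<delta> (max t 0))"
    using eventually_ge_at_top[of 0]
    by eventually_elim (simp add: sums_unique[OF normalised_weights_mgf_sums])
  with ln_normalised_mgf_tendsto show
    "((\<lambda>t. ln (\<Sum>k. exp (\<theta> * real k) * (w k (max t 0) / W 1 (max t 0))) / v (\<delta> (max t 0)))
      \<longlongrightarrow> \<Delta> (exp \<theta>) - \<Delta> 1) at_top"
    using tendsto_cong by fastforce
  have "exp differentiable (at \<theta>)"
    using DERIV_exp real_differentiable_def by blast
  with \<Delta>_diff[of "exp \<theta>"] have "(\<lambda>\<theta>. \<Delta> (exp \<theta>)) differentiable (at \<theta>)"
    by (simp add: differentiable_compose)
  then show "(\<lambda>\<theta>. \<Delta> (exp \<theta>) - \<Delta> 1) differentiable (at \<theta>)"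
    by (intro differentiable_diff differentiable_const)
next
  have "\<forall>\<^sub>F t in at_top. v (\<delta> t) = v (\<delta> (max t 0))"
    using eventually_ge_at_top[of 0] by eventually_elim simp
  with filterlim_compose[OF v_lim \<delta>_lim] show "filterlim (\<lambda>t. v (\<delta> (max t 0))) at_top at_top"
    using filterlim_cong by fastforce
qed

end

theorem proposition3p1:
  fixes d :: "nat \<Rightarrow> nat \<Rightarrow> real"         \<comment> \<open>d k j = d_{k,j}\<close>
    and \<delta>s :: "nat \<Rightarrow> real \<Rightarrow> real"     \<comment> \<open>\<delta>s j t = \<delta>_j(t)\<close>
    and M :: "real \<Rightarrow> 'a measure"
    and N :: "real \<Rightarrow> 'a \<Rightarrow> nat"
    and n :: nat
    and dd :: "nat \<Rightarrow> real"               \<comment> \<open>dd k = d_k\<close>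
    and \<delta> :: "real \<Rightarrow> real"
    and v :: "real \<Rightarrow> real"
    and \<Delta> :: "real \<Rightarrow> real"
  assumes d_nonneg: "\<And>k j. d k j \<ge> 0"
    and D_fin: "\<And>j x. x > 0 \<Longrightarrow> summable (\<lambda>k. d k j * x ^ k) \<and> gen_series (\<lambda>k. d k j) x > 0"
    and \<delta>s_pos: "\<And>j t. t \<ge> 0 \<Longrightarrow> \<delta>s j t > 0"
    and \<delta>s_lim: "\<And>j. filterlim (\<delta>s j) at_top at_top"
    and Z_fin: "\<And>x. x > 0 \<Longrightarrow>
        summable (\<lambda>j. d j j * x ^ j / gen_series (\<lambda>k. d k j) x) \<and>
        (\<Sum>j. d j j * x ^ j / gen_series (\<lambda>k. d k j) x) > 0"
    and prob_sp: "\<And>t. t \<ge> 0 \<Longrightarrow> prob_space (M t)"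
    and N_meas: "\<And>t. t \<ge> 0 \<Longrightarrow> N t \<in> measurable (M t) (count_space UNIV)"
    and N_law: "\<And>t k. t \<ge> 0 \<Longrightarrow>
        measure (M t) {\<omega> \<in> space (M t). N t \<omega> = k} =
          (d k k * (\<delta>s k t) ^ k / gen_series (\<lambda>i. d i k) (\<delta>s k t)) /
          (\<Sum>j. d j j * (\<delta>s j t) ^ j / gen_series (\<lambda>i. d i j) (\<delta>s j t))"
    \<comment> \<open>(B1)\<close>
    and B1_d: "\<And>j k. j \<ge> n \<Longrightarrow> d k j = dd k"
    and B1_\<delta>: "\<And>j t. j \<ge> n \<Longrightarrow> t \<ge> 0 \<Longrightarrow> \<delta>s j t = \<delta> t"
    and v_pos: "\<And>t. t > 0 \<Longrightarrow> v t > 0"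
    and v_lim: "filterlim v at_top at_top"
    and \<Delta>_diff: "\<And>u. u > 0 \<Longrightarrow> \<Delta> differentiable (at u)"
    and \<Delta>_lim: "\<And>u. u > 0 \<Longrightarrow>
        ((\<lambda>t. ln (gen_series dd (u * t)) / v t) \<longlongrightarrow> \<Delta> u) at_top"
    \<comment> \<open>(B2)\<close>
    and B2: "\<not> bdd_above {k. d k k > 0}"
    \<comment> \<open>(B3)\<close>
    and B3_pos: "\<And>k. k < n \<Longrightarrow> dd k > 0 \<Longrightarrow>
        ((\<lambda>t. (d k k * (\<delta>s k t) ^ k / gen_series (\<lambda>i. d i k) (\<delta>s k t)) /
              (dd k * (\<delta> t) ^ k / gen_series dd (\<delta> t))) \<longlongrightarrow> 0) at_top"
    and B3_zero: "\<And>k. k < n \<Longrightarrow> dd k = 0 \<Longrightarrow> d k k = 0"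
  shows "LDP (\<lambda>t A. measure (M t) {\<omega> \<in> space (M t). real (N t \<omega>) / v (\<delta> t) \<in> A})
             (\<lambda>t. v (\<delta> t))
             (legendre (\<lambda>\<theta>. \<Delta> (exp \<theta>) - \<Delta> 1))
         \<and> good_rate_function (legendre (\<lambda>\<theta>. \<Delta> (exp \<theta>) - \<Delta> 1))"
proof -
  define w where "w k t = d k k * \<delta>s k t ^ k / gen_series (\<lambda>i. d i k) (\<delta>s k t)" for k t
  have dd_eq: "dd = (\<lambda>k. d k n)" and d_tail: "\<And>k. n \<le> k \<Longrightarrow> (\<lambda>i. d i k) = dd"
    using B1_d by auto
  have \<delta>_eq: "\<forall>\<^sub>F t in at_top. \<delta>s n t = \<delta> t"
    using eventually_ge_at_top[of 0] by eventually_elim (simp add: B1_\<delta>)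
  interpret perturbed_power_series dd w \<delta> v \<Delta> n
  proof
    fix k :: nat and t y :: real
    show "0 \<le> dd k" "y > 0 \<Longrightarrow> summable (\<lambda>k. dd k * y ^ k)"
      using d_nonneg D_fin by (simp_all add: dd_eq)
    have "{k. d k k > 0} \<subseteq> {k. dd k > 0} \<union> {..n}"
      using B1_d by (auto simp: not_le)
    then show "\<not> bdd_above {k. dd k > 0}"
      using B2 by (meson bdd_above_Un bdd_above_Iic bdd_above_mono)
    show "t \<ge> 0 \<Longrightarrow> \<delta> t > 0"
      using \<delta>s_pos[of t n] B1_\<delta>[of n t] by simp
    show "filterlim \<delta> at_top at_top"
      using \<delta>s_lim[of n] filterlim_cong[OF refl refl \<delta>_eq] by simp
    show "t \<ge> 0 \<Longrightarrow> 0 \<le> w k t"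
      using d_nonneg \<delta>s_pos D_fin[of "\<delta>s k t" k] by (simp add: w_def less_imp_le)
    show "t \<ge> 0 \<Longrightarrow> n \<le> k \<Longrightarrow> w k t = dd k * \<delta> t ^ k / gen_series dd (\<delta> t)"
      using B1_d B1_\<delta> d_tail by (simp add: w_def)
    show "k < n \<Longrightarrow> dd k > 0 \<Longrightarrow>
        ((\<lambda>t. w k t / (dd k * \<delta> t ^ k / gen_series dd (\<delta> t))) \<longlongrightarrow> 0) at_top"
      using B3_pos by (simp add: w_def)
    show "k < n \<Longrightarrow> dd k = 0 \<Longrightarrow> w k t = 0"
      using B3_zero by (simp add: w_def)
  qed (use v_lim \<Delta>_lim in auto)
  interpret G: gaertner_ellis_nat "\<lambda>t k. w k (max t 0) / W 1 (max t 0)" "\<lambda>t. v (\<delta> (max t 0))"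
    "\<lambda>\<theta>. \<Delta> (exp \<theta>) - \<Delta> 1"
    using v_pos \<Delta>_diff by (rule gaertner_ellis_nat_normalised)
  have law: "\<forall>\<^sub>F t in at_top. finite_measure (M t) \<and> N t \<in> measurable (M t) (count_space UNIV) \<and>
      (\<forall>k. measure (M t) {\<omega> \<in> space (M t). N t \<omega> = k} = w k (max t 0) / W 1 (max t 0))"
    using eventually_ge_at_top[of 0]
    by eventually_elim (use prob_sp N_meas N_law in \<open>simp add: prob_space.finite_measure w_def W_def\<close>)
  have speed: "\<forall>\<^sub>F t in at_top. v (\<delta> t) = v (\<delta> (max t 0))"
    using eventually_ge_at_top[of 0] by eventually_elim simp
  from G.LDP_of_law[OF law speed] G.good_rate_function_I show ?thesis
    by simp
qed

end
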